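(* Let $X=\min\{g_{sr},g_{sd}\}$ and $$\bar C_{s_1,\mathrm{SC}}:=\tfrac12\,\mathbb E\Big[\log_2\Big(1+\tfrac{a_1\rho X}{a_2\rho X+1}\Big)\Big]=\tfrac12\,\mathbb E\big[\log_2(1+\rho X)-\log_2(1+a_2\rho X)\big].$$ Then \begin{align*} \bar C_{s_1,\mathrm{SC}}=\frac{1}{2\ln 2}&\sum_{\substack{k_0+\cdots+k_{m_{sr}}=N_r\\ k_0\neq N_r}}\ \sum_{\substack{l_0+\cdots+l_{m_{sd}}=N_d\\ l_0\neq N_d}}\binom{N_r}{k_0,\ldots,k_{m_{sr}}}\binom{N_d}{l_0,\ldots,l_{m_{sd}}}(-1)^{N_r+N_d-k_0-l_0}\\ &\times\Big\{\prod_{\mu=0}^{m_{sr}-1}\Big(\tfrac{1}{\mu!}\Big)^{k_{\mu+1}}\Big\}\Big(\tfrac{m_{sr}}{\Omega_{sr}}\Big)^{\tau}\Big\{\prod_{\nu=0}^{m_{sd}-1}\Big(\tfrac{1}{\nu!}\Big)^{l_{\nu+1}}\Big\}\Big(\tfrac{m_{sd}}{\Omega_{sd}}\Big)^{\omega}\frac{\Gamma(\tau+\omega+1)}{\rho^{\tau+\omega}}\\ &\times\Big\{e^{\Psi_{k_0,l_0}/\rho}\,\Gamma\Big[-\tau-\omega,\tfrac{\Psi_{k_0,l_0}}{\rho}\Big]-\frac{1}{a_2^{\tau+\omega}}e^{\Psi_{k_0,l_0}/(\rho a_2)}\,\Gamma\Big[-\tau-\omega,\tfrac{\Psi_{k_0,l_0}}{\rho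 a_2}\Big]\Big\}, \end{align*} where $\tau=\sum_{\mu=0}^{m_{sr}-1}\mu k_{\mu+1}$, $\omega=\sum_{\nu=0}^{m_{sd}-1}\nu l_{\nu+1}$ and $\Psi_{k_0,l_0}=\frac{(N_r-k_0)m_{sr}}{\Omega_{sr}}+\frac{(N_d-l_0)m_{sd}}{\Omega_{sd}}$.
   Context: Let $N_r,N_d$ be positive integers, $m_{sr},m_{sd},m_{rd}$ positive integers, and $\Omega_{sr},\Omega_{sd},\Omega_{rd}>0$. Let $\{G_{sr,i}\}_{i=1}^{N_r}$, $\{G_{sd,j}\}_{j=1}^{N_d}$, $\{G_{rd,k}\}_{k=1}^{N_d}$ be mutually independent random variables, where each $G_{sr,i}$ has the Gamma density $f(x)=\frac{(m_{sr}/\Omega_{sr})^{m_{sr}}x^{m_{sr}-1}}{\Gamma(m_{sr})}e^{-m_{sr}x/\Omega_{sr}}$, $x>0$ (shape $m_{sr}$, mean $\Omega_{sr}$; these are the squared magnitudes of Nakagami-$m$ channel gains), and analogously $G_{sd,j}$ with parameters $(m_{sd},\Omega_{sd})$ and $G_{rd,k}$ with $(m_{rd},\Omega_{rd})$. Selection combining (SC) gains: $g_{sr}=\max_i G_{sr,i}$, $g_{sd}=\max_j G_{sd,j}$, $g_{rd}=\max_k G_{rd,k}$. Let $\rho>0$ (transmit SNR) and power-allocation coefficients $a_1,a_2\in(0,1)$ with $a_1+a_2=1$, $a_1>a_2$. Sums $\sum_{k_0+\cdots+k_{m}=N,\,k_0\neq N}$ run over tuples of nonnegative integers $(k_0,\dots,k_m)$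 summing to $N$ with $k_0\ne N$, and $\binom{N}{k_0,\ldots,k_m}$ is the multinomial coefficient. $\Gamma(\cdot)$ is the Gamma function and $\Gamma[s,z]=\int_z^\infty t^{s-1}e^{-t}\,dt$ ($z>0$, any real $s$) is the upper incomplete Gamma function. *)

theory Defs
  imports "HOL-Probability.Probability"
begin

text \<open>Gamma density with shape m and mean Omega (squared Nakagami-m gain).\<close>
definition gamma_dens :: "nat \<Rightarrow> real \<Rightarrow> real \<Rightarrow> real" where
  "gamma_dens m \<Omega> x =
     (if x > 0 then (real m / \<Omega>) ^ m * x ^ (m - 1) / Gamma (real m) * exp (- real m * x / \<Omega>)
      else 0)"

definition upper_Gamma :: "real \<Rightarrow> real \<Rightarrow> real" where
  "upper_Gamma s z = (LBINT t:{z<..}. t powr (s - 1) * exp (- t))"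

definition tuples :: "nat \<Rightarrow> nat \<Rightarrow> (nat \<Rightarrow> nat) set" where
  "tuples N m = {k \<in> {..m} \<rightarrow>\<^sub>E {..N}. (\<Sum>i\<le>m. k i) = N \<and> k 0 \<noteq> N}"

definition multinom :: "nat \<Rightarrow> nat \<Rightarrow> (nat \<Rightarrow> nat) \<Rightarrow> real" where
  "multinom N m k = fact N / (\<Prod>i\<le>m. fact (k i))"

end

theory Submission
  imports Defs "HOL-Real_Asymp.Real_Asymp"
begin

(*
  The capacity is E[H(X)] / ln 2 with H(x) = ln (1 + rho x) - ln (1 + a2 rho x).  As H(0) = 0,
  writing H(X) as the integral of H' over [0, X] and applying Fubini gives
  E[H(X)] = int_0^oo H'(t) P(X > t) dt, and by independence
  P(X > t) = (1 - F_sr(t)^Nr) (1 - F_sd(t)^Nd) with the Erlang CDFs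
  F(t) = 1 - sum_{mu<m} (c t)^mu e^(-c t) / mu!.  Expanding the powers by the multinomial theorem
  turns the integrand into a finite combination of beta t^n e^(-Psi t) / (1 + beta t) with
  beta in {rho, a2 rho}.  Such an integral equals n! / beta^n e^(Psi/beta) Gamma[-n, Psi/beta]:
  for n = 0 substitute t = Psi/beta + Psi x, and both sides satisfy the same recurrence in n,
  which for Gamma[-n, z] comes from integrating (t^(-n-1) e^(-t))' over [z, oo).
*)

lemma upper_Gamma_eq_nn_integral:
  assumes "0 < z"
  shows "upper_Gamma s z = enn2real (\<integral>\<^sup>+t. ennreal (t powr (s - 1) * exp (- t)) * indicator {z..} t \<partial>lborel)"
proof -
  have "upper_Gamma s z = (\<integral>t. indicator {z<..} t * (t powr (s - 1) * exp (- t)) \<partial>lborel)"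
    unfolding upper_Gamma_def set_lebesgue_integral_def by simp
  also have "\<dots> = enn2real (\<integral>\<^sup>+t. ennreal (indicator {z<..} t * (t powr (s - 1) * exp (- t))) \<partial>lborel)"
    by (rule integral_eq_nn_integral) (auto split: split_indicator)
  also have "(\<integral>\<^sup>+t. ennreal (indicator {z<..} t * (t powr (s - 1) * exp (- t))) \<partial>lborel)
      = (\<integral>\<^sup>+t. ennreal (t powr (s - 1) * exp (- t)) * indicator {z..} t \<partial>lborel)"
    by (intro nn_integral_cong_AE)
       (use AE_lborel_singleton[of z] in \<open>auto split: split_indicator elim!: eventually_mono\<close>)
  finally show ?thesis .
qed

lemma upper_Gamma_minus_nat_Suc:
  assumes z: "0 < z"
  shows "real (Suc n) * upper_Gamma (- real (Suc n)) z + upper_Gamma (- real n) z = exp (- z) / z ^ Suc n"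
proof -
  define f where "f u = u powr (- real n - 1) * exp (- u)" for u :: real
  define g where "g u = u powr (- real (Suc n) - 1) * exp (- u)" for u :: real
  have "(\<integral>\<^sup>+u. ennreal (f u + real (Suc n) * g u) * indicator {z..} u \<partial>lborel) = ennreal (0 - - f z)"
  proof (rule nn_integral_FTC_atLeast)
    show "(\<lambda>u. f u + real (Suc n) * g u) \<in> borel_measurable borel"
      unfolding f_def g_def by measurable
    show "((\<lambda>u. - f u) has_real_derivative f u + real (Suc n) * g u) (at u)" if "z \<le> u" for u
      using that z unfolding f_def g_def
      by (auto intro!: derivative_eq_intros simp: algebra_simps diff_add_eq[symmetric])
    show "0 \<le> f u + real (Suc n) * g u" for u
      unfolding f_def g_def by simp
    show "((\<lambda>u. - f u) \<longlongrightarrow> 0) at_top"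
      unfolding f_def by real_asymp
  qed
  also have "(\<integral>\<^sup>+u. ennreal (f u + real (Suc n) * g u) * indicator {z..} u \<partial>lborel)
      = (\<integral>\<^sup>+u. ennreal (f u) * indicator {z..} u \<partial>lborel)
        + ennreal (real (Suc n)) * (\<integral>\<^sup>+u. ennreal (g u) * indicator {z..} u \<partial>lborel)"
    unfolding f_def g_def
    by (simp add: ennreal_plus ennreal_mult distrib_right mult.assoc nn_integral_add nn_integral_cmult)
  finally have ftc: "ennreal (f z) = \<dots>" by simp
  define A where "A = (\<integral>\<^sup>+u. ennreal (f u) * indicator {z..} u \<partial>lborel)"
  define B where "B = (\<integral>\<^sup>+u. ennreal (g u) * indicator {z..} u \<partial>lborel)"
  have "A + ennreal (real (Suc n)) * B < top"
    using ftc unfolding A_def B_def by (metis ennreal_less_top)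
  then have "enn2real (A + ennreal (real (Suc n)) * B) = enn2real A + real (Suc n) * enn2real B"
    by (simp add: ennreal_add_less_top enn2real_plus enn2real_mult del: of_nat_Suc)
  moreover have "upper_Gamma (- real n) z = enn2real A" "upper_Gamma (- real (Suc n)) z = enn2real B"
    unfolding A_def B_def f_def g_def by (rule upper_Gamma_eq_nn_integral[OF z])+
  moreover have "- real n - 1 = - real (Suc n)" by simp
  then have "f z = exp (- z) / z ^ Suc n"
    using z unfolding f_def by (simp only: powr_minus powr_realpow divide_inverse mult.commute)
  ultimately show ?thesis
    using arg_cong[OF ftc, of enn2real] z unfolding A_def[symmetric] B_def[symmetric] by simp
qed

lemma has_bochner_integral_power_exp:
  assumes "0 < (\<Psi>::real)"
  shows "has_bochner_integral lborel (\<lambda>t. indicator {0..} t * t ^ n * exp (- \<Psi> * t)) (fact n / \<Psi> ^ Suc n)"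
proof (rule has_bochner_integral_nn_integral)
  have "(\<integral>\<^sup>+t. ennreal (indicator {0..} t * t ^ n * exp (- \<Psi> * t)) \<partial>lborel)
      = (\<integral>\<^sup>+t. ennreal (1 / \<Psi>) * ennreal (erlang_density 0 \<Psi> t * t ^ n) \<partial>lborel)"
    using assms by (intro nn_integral_cong)
      (auto simp: erlang_density_def ennreal_mult'[symmetric] split: split_indicator)
  also have "\<dots> = ennreal (1 / \<Psi>) * (\<integral>\<^sup>+t. ennreal (erlang_density 0 \<Psi> t * t ^ n) \<partial>lborel)"
    by (rule nn_integral_cmult) auto
  also have "\<dots> = ennreal (fact n / \<Psi> ^ Suc n)"
    using assms nn_integral_erlang_ith_moment[OF assms, of 0 n]
    by (simp add: ennreal_mult'[symmetric] field_simps)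
  finally show "(\<integral>\<^sup>+t. ennreal (indicator {0..} t * t ^ n * exp (- \<Psi> * t)) \<partial>lborel)
      = ennreal (fact n / \<Psi> ^ Suc n)" .
qed (use assms in \<open>auto split: split_indicator\<close>)

definition pole_exp :: "nat \<Rightarrow> real \<Rightarrow> real \<Rightarrow> real \<Rightarrow> real" where
  "pole_exp n \<Psi> \<beta> t = indicator {0..} t * (\<beta> * t ^ n * exp (- \<Psi> * t) / (1 + \<beta> * t))"

lemma borel_measurable_pole_exp [measurable]: "pole_exp n \<Psi> \<beta> \<in> borel_measurable borel"
  unfolding pole_exp_def[abs_def] by measurable

lemma integrable_pole_exp:
  assumes "0 < \<Psi>" "0 < \<beta>"
  shows "integrable lborel (pole_exp n \<Psi> \<beta>)"
proof (rule Bochner_Integration.integrable_bound)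
  show "integrable lborel (\<lambda>t. \<beta> * (indicator {0..} t * t ^ n * exp (- \<Psi> * t)))"
    using has_bochner_integral_power_exp[OF assms(1)] by (auto simp: has_bochner_integral_iff)
  have "norm (pole_exp n \<Psi> \<beta> t) \<le> norm (\<beta> * (indicator {0..} t * t ^ n * exp (- \<Psi> * t)))" for t
  proof (cases "0 \<le> t")
    case True
    have "1 \<le> 1 + \<beta> * t" "0 \<le> \<beta> * t ^ n * exp (- \<Psi> * t)" using True assms by simp_all
    then have "\<beta> * t ^ n * exp (- \<Psi> * t) / (1 + \<beta> * t) \<le> \<beta> * t ^ n * exp (- \<Psi> * t)"
      by (simp add: divide_le_eq mult_le_cancel_left1)
    then show ?thesis using True assms by (simp add: pole_exp_def abs_mult)
  qed (simp add: pole_exp_def)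
  then show "AE t in lborel. norm (pole_exp n \<Psi> \<beta> t) \<le> norm (\<beta> * (indicator {0..} t * t ^ n * exp (- \<Psi> * t)))"
    by simp
qed simp

lemma integral_pole_exp_Suc:
  assumes "0 < \<Psi>" "0 < \<beta>"
  shows "integral\<^sup>L lborel (pole_exp (Suc n) \<Psi> \<beta>)
    = fact n / \<Psi> ^ Suc n - integral\<^sup>L lborel (pole_exp n \<Psi> \<beta>) / \<beta>"
proof -
  have pole_exp_Suc:
    "pole_exp (Suc n) \<Psi> \<beta> t = indicator {0..} t * t ^ n * exp (- \<Psi> * t) - pole_exp n \<Psi> \<beta> t / \<beta>" for t
  proof (cases "0 \<le> t")
    case True
    then have "0 < 1 + \<beta> * t" using assms by (simp add: add_pos_nonneg)
    then have "\<beta> * t ^ Suc n * e / (1 + \<beta> * t) = t ^ n * e - t ^ n * e / (1 + \<beta> * t)" for e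
      by (simp add: field_simps)
    then show ?thesis using True assms by (simp add: pole_exp_def mult.assoc del: power_Suc)
  qed (simp add: pole_exp_def)
  have "integrable lborel (\<lambda>t. indicator {0..} t * t ^ n * exp (- \<Psi> * t))"
    and "integral\<^sup>L lborel (\<lambda>t. indicator {0..} t * t ^ n * exp (- \<Psi> * t)) = fact n / \<Psi> ^ Suc n"
    using has_bochner_integral_power_exp[OF assms(1)] by (auto simp: has_bochner_integral_iff)
  with integrable_pole_exp[OF assms] show ?thesis
    unfolding pole_exp_Suc by (simp add: Bochner_Integration.integral_diff del: power_Suc)
qed

lemma integral_pole_exp_0:
  assumes \<Psi>: "0 < \<Psi>" and \<beta>: "0 < \<beta>"
  shows "integral\<^sup>L lborel (pole_exp 0 \<Psi> \<beta>) = exp (\<Psi> / \<beta>) * upper_Gamma 0 (\<Psi> / \<beta>)"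
proof -
  define z where "z = \<Psi> / \<beta>"
  have z: "0 < z" using assms by (simp add: z_def)
  define h where "h t = t powr (0 - 1) * exp (- t)" for t :: real
  \<comment> \<open>substitute \<open>t = z + \<Psi> x\<close>; then \<open>\<Psi> / t = \<beta> / (1 + \<beta> x)\<close>\<close>
  have "(\<integral>\<^sup>+t. ennreal (h t) * indicator {z..} t \<partial>lborel)
      = ennreal \<Psi> * (\<integral>\<^sup>+x. ennreal (h (z + \<Psi> * x)) * indicator {z..} (z + \<Psi> * x) \<partial>lborel)"
    using nn_integral_real_affine[of "\<lambda>t. ennreal (h t) * indicator {z..} t" \<Psi> z] \<Psi>
    unfolding h_def by simp
  also have "\<dots> = (\<integral>\<^sup>+x. ennreal (exp (- z)) * ennreal (pole_exp 0 \<Psi> \<beta> x) \<partial>lborel)"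
  proof (subst nn_integral_cmult[symmetric], simp add: h_def, intro nn_integral_cong)
    fix x :: real
    show "ennreal \<Psi> * (ennreal (h (z + \<Psi> * x)) * indicator {z..} (z + \<Psi> * x))
        = ennreal (exp (- z)) * ennreal (pole_exp 0 \<Psi> \<beta> x)"
    proof (cases "0 \<le> x")
      case True
      have pos: "0 < 1 + \<beta> * x" using True \<beta> by (simp add: add_pos_nonneg)
      have "z + \<Psi> * x = \<Psi> * (1 + \<beta> * x) / \<beta>" using \<beta> by (simp add: z_def field_simps)
      then have ratio: "\<Psi> / (z + \<Psi> * x) = \<beta> / (1 + \<beta> * x)" using \<Psi> \<beta> by simp
      have "0 < z + \<Psi> * x" using True z \<Psi> by (simp add: add_pos_nonneg)
      then have "h (z + \<Psi> * x) = exp (- z) * exp (- \<Psi> * x) / (z + \<Psi> * x)"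
        by (simp add: h_def powr_minus_divide exp_diff exp_minus field_simps)
      then have "\<Psi> * h (z + \<Psi> * x) = exp (- z) * exp (- \<Psi> * x) * (\<Psi> / (z + \<Psi> * x))"
        by simp
      also have "\<dots> = exp (- z) * (\<beta> * exp (- \<Psi> * x) / (1 + \<beta> * x))"
        unfolding ratio by simp
      finally have "\<Psi> * h (z + \<Psi> * x) = exp (- z) * (\<beta> * exp (- \<Psi> * x) / (1 + \<beta> * x))" .
      then show ?thesis
        using True pos \<beta> \<Psi> z
        by (simp add: pole_exp_def h_def ennreal_mult[symmetric] mult_nonneg_nonneg)
    next
      case False
      then have "z + \<Psi> * x < z" using \<Psi> by (simp add: mult_pos_neg)
      then show ?thesis using False by (simp add: pole_exp_def)
    qed
  qed
  also have "\<dots> = ennreal (exp (- z)) * (\<integral>\<^sup>+x. ennreal (pole_exp 0 \<Psi> \<beta> x) \<partial>lborel)"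
    by (rule nn_integral_cmult) simp
  finally have "upper_Gamma 0 z = exp (- z) * enn2real (\<integral>\<^sup>+x. ennreal (pole_exp 0 \<Psi> \<beta> x) \<partial>lborel)"
    unfolding upper_Gamma_eq_nn_integral[OF z] h_def by (simp add: enn2real_mult)
  moreover have "integral\<^sup>L lborel (pole_exp 0 \<Psi> \<beta>) = enn2real (\<integral>\<^sup>+x. ennreal (pole_exp 0 \<Psi> \<beta> x) \<partial>lborel)"
    by (rule integral_eq_nn_integral) (use \<beta> in \<open>auto simp: pole_exp_def split: split_indicator\<close>)
  ultimately show ?thesis by (simp add: z_def exp_minus field_simps)
qed

lemma integral_pole_exp:
  assumes "0 < \<Psi>" and \<beta>: "0 < \<beta>"
  shows "integral\<^sup>L lborel (pole_exp n \<Psi> \<beta>) = fact n / \<beta> ^ n * exp (\<Psi> / \<beta>) * upper_Gamma (- real n) (\<Psi> / \<beta>)"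
proof (induction n)
  case 0
  then show ?case using integral_pole_exp_0[OF assms] by simp
next
  case (Suc n)
  define z where "z = \<Psi> / \<beta>"
  have z: "0 < z" and \<Psi>_eq: "\<Psi> = \<beta> * z" using assms by (simp_all add: z_def)
  have rec: "real (Suc n) * upper_Gamma (- real (Suc n)) z = exp (- z) / z ^ Suc n - upper_Gamma (- real n) z"
    using upper_Gamma_minus_nat_Suc[OF z, of n] by linarith
  have "integral\<^sup>L lborel (pole_exp (Suc n) \<Psi> \<beta>)
      = fact n / \<Psi> ^ Suc n - fact n / \<beta> ^ n * exp z * upper_Gamma (- real n) z / \<beta>"
    using integral_pole_exp_Suc[OF assms, of n] Suc by (simp add: z_def)
  also have "\<dots> = fact n / \<beta> ^ Suc n * exp z * (exp (- z) / z ^ Suc n - upper_Gamma (- real n) z)"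
    using z \<beta> unfolding \<Psi>_eq by (simp add: field_simps power_mult_distrib exp_minus)
  also have "\<dots> = fact (Suc n) / \<beta> ^ Suc n * exp z * upper_Gamma (- real (Suc n)) z"
    unfolding rec[symmetric] by (simp del: of_nat_Suc)
  finally show ?case by (simp add: z_def)
qed

definition weak_compositions :: "nat \<Rightarrow> nat \<Rightarrow> (nat \<Rightarrow> nat) set" where
  "weak_compositions m N = {k \<in> {..m} \<rightarrow>\<^sub>E {..N}. (\<Sum>i\<le>m. k i) = N}"

lemma weak_compositions_0: "weak_compositions 0 N = {(\<lambda>_. undefined)(0 := N)}"
  unfolding weak_compositions_def by (auto simp: PiE_iff extensional_def fun_eq_iff)

lemma finite_weak_compositions: "finite (weak_compositions m N)"
  unfolding weak_compositions_def
  by (rule finite_subset[OF _ finite_PiE[of "{..m}" "\<lambda>_. {..N}"]]) auto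

lemma sum_weak_compositions_Suc:
  fixes F :: "(nat \<Rightarrow> nat) \<Rightarrow> 'b::comm_monoid_add"
  shows "(\<Sum>k\<in>weak_compositions (Suc m) N. F k)
    = (\<Sum>(j, k)\<in>Sigma {..N} (\<lambda>j. weak_compositions m (N - j)). F (k(Suc m := j)))"
proof (rule sum.reindex_bij_witness[where j = "\<lambda>k. (k (Suc m), restrict k {..m})"
      and i = "\<lambda>(j, k). k(Suc m := j)"], goal_cases)
  case (1 k)
  then have "k \<in> extensional {..Suc m}" unfolding weak_compositions_def by (auto simp: PiE_iff)
  then show ?case by (auto simp: fun_eq_iff extensional_def)
next
  case (2 k)
  then have k: "k \<in> {..Suc m} \<rightarrow>\<^sub>E {..N}" "(\<Sum>i\<le>m. k i) + k (Suc m) = N"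
    unfolding weak_compositions_def by (auto simp: sum.atMost_Suc)
  have "k i \<le> N - k (Suc m)" if "i \<le> m" for i
    using member_le_sum[of i "{..m}" k] that k(2) by simp
  then show ?case using k unfolding weak_compositions_def by (auto simp: PiE_iff)
next
  case (3 jk)
  then obtain j k where jk: "jk = (j, k)" "k \<in> weak_compositions m (N - j)" by auto
  then have "k \<in> extensional {..m}" unfolding weak_compositions_def by (auto simp: PiE_iff)
  then show ?case using jk by (auto simp: fun_eq_iff extensional_def)
next
  case (4 jk)
  then obtain j k where jk: "jk = (j, k)" "j \<le> N" "k \<in> weak_compositions m (N - j)" by auto
  then have k: "k \<in> {..m} \<rightarrow>\<^sub>E {..N - j}" "(\<Sum>i\<le>m. k i) = N - j"
    unfolding weak_compositions_def by auto
  have "(k(Suc m := j)) i \<le> N" if "i \<le> Suc m" for i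
  proof (cases "i = Suc m")
    case False
    then have "k i \<le> N - j" using that k(1) by (auto simp: PiE_iff le_Suc_eq)
    then show ?thesis using False by simp
  qed (use jk in simp)
  then show ?case using jk k unfolding weak_compositions_def
    by (auto simp: PiE_iff extensional_def sum.atMost_Suc)
next
  case (5 k)
  then have "k \<in> extensional {..Suc m}" unfolding weak_compositions_def by (auto simp: PiE_iff)
  then have "(restrict k {..m})(Suc m := k (Suc m)) = k" by (auto simp: fun_eq_iff extensional_def)
  then show ?case by simp
qed

lemma multinom_fun_upd_Suc:
  assumes "j \<le> N"
  shows "multinom N (Suc m) (k(Suc m := j)) = real (N choose j) * multinom (N - j) m k"
proof -
  have "(\<Prod>i\<le>Suc m. fact ((k(Suc m := j)) i)) = (\<Prod>i\<le>m. fact (k i)) * (fact j :: real)"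
    by (simp add: prod.atMost_Suc)
  moreover have "real (N choose j) = fact N / (fact j * fact (N - j))"
    using assms by (simp add: binomial_fact)
  moreover have "(\<Prod>i\<le>m. fact (k i)) \<noteq> (0::real)" by simp
  ultimately show ?thesis
    unfolding multinom_def by (simp add: field_simps)
qed

lemma multinomial_theorem:
  fixes a :: "nat \<Rightarrow> real"
  shows "(\<Sum>i\<le>m. a i) ^ N = (\<Sum>k\<in>weak_compositions m N. multinom N m k * (\<Prod>i\<le>m. a i ^ k i))"
proof (induction m arbitrary: N)
  case 0
  then show ?case by (simp add: weak_compositions_0 multinom_def)
next
  case (Suc m)
  have "(\<Sum>i\<le>Suc m. a i) ^ N = (a (Suc m) + (\<Sum>i\<le>m. a i)) ^ N"
    by (simp add: add.commute)
  also have "\<dots> = (\<Sum>j\<le>N. real (N choose j) * a (Suc m) ^ j * (\<Sum>i\<le>m. a i) ^ (N - j))"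
    by (rule binomial_ring)
  also have "\<dots> = (\<Sum>(j, k)\<in>Sigma {..N} (\<lambda>j. weak_compositions m (N - j)).
      real (N choose j) * a (Suc m) ^ j * (multinom (N - j) m k * (\<Prod>i\<le>m. a i ^ k i)))"
    by (simp add: Suc sum_distrib_left sum.Sigma finite_weak_compositions)
  also have "\<dots> = (\<Sum>(j, k)\<in>Sigma {..N} (\<lambda>j. weak_compositions m (N - j)).
      multinom N (Suc m) (k(Suc m := j)) * (\<Prod>i\<le>Suc m. a i ^ (k(Suc m := j)) i))"
    by (intro sum.cong refl) (auto simp: multinom_fun_upd_Suc)
  also have "\<dots> = (\<Sum>k\<in>weak_compositions (Suc m) N. multinom N (Suc m) k * (\<Prod>i\<le>Suc m. a i ^ k i))"
    by (rule sum_weak_compositions_Suc[symmetric])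
  finally show ?case .
qed

lemma tuples_eq: "tuples N m = {k \<in> weak_compositions m N. k 0 \<noteq> N}"
  unfolding tuples_def weak_compositions_def by blast

lemma finite_tuples: "finite (tuples N m)"
  unfolding tuples_eq using finite_weak_compositions by simp

lemma tuples_head_less:
  assumes "k \<in> tuples N m"
  shows "k 0 < N"
proof -
  have "k 0 \<le> N" "k 0 \<noteq> N" using assms unfolding tuples_def by (auto simp: PiE_iff)
  then show ?thesis by simp
qed

lemma weak_compositions_eq_insert_tuples:
  "weak_compositions m N = insert (\<lambda>i\<in>{..m}. if i = 0 then N else 0) (tuples N m)"
proof -
  let ?e = "\<lambda>i\<in>{..m}. if i = 0 then N else 0"
  have "(\<Sum>i\<le>m. ?e i) = (\<Sum>i\<le>m. if i = 0 then N else 0)" by (rule sum.cong) auto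
  then have "?e \<in> weak_compositions m N"
    unfolding weak_compositions_def by (simp add: PiE_iff)
  moreover have "k = ?e" if "k \<in> weak_compositions m N" "k 0 = N" for k
  proof
    fix i
    have k: "k \<in> {..m} \<rightarrow>\<^sub>E {..N}" "k 0 + (\<Sum>i\<in>{..m} - {0}. k i) = N"
      using that(1) sum.remove[of "{..m}" 0 k] unfolding weak_compositions_def by auto
    then show "k i = ?e i"
      using that(2) by (cases "i \<le> m") (auto simp: PiE_iff extensional_def)
  qed
  ultimately show ?thesis unfolding tuples_eq by blast
qed

definition gamma_CDF :: "nat \<Rightarrow> real \<Rightarrow> real \<Rightarrow> real" where
  "gamma_CDF m c t = 1 - (\<Sum>\<mu><m. (c * t) ^ \<mu> * exp (- c * t) / fact \<mu>)"

(* In the expansion of gamma_CDF m c t ^ N, k 0 counts the factors 1 and k (mu + 1) the factors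
   (c t)^mu e^(-c t) / mu!; their product is a multiple of t ^ tuple_degree m k e^(-(N - k 0) c t). *)
definition tuple_degree :: "nat \<Rightarrow> (nat \<Rightarrow> nat) \<Rightarrow> nat" where
  "tuple_degree m k = (\<Sum>\<mu><m. \<mu> * k (\<mu> + 1))"

definition tail_coeff :: "nat \<Rightarrow> nat \<Rightarrow> real \<Rightarrow> (nat \<Rightarrow> nat) \<Rightarrow> real" where
  "tail_coeff N m c k =
     multinom N m k * (-1) ^ (N - k 0 + 1) * (\<Prod>\<mu><m. (1 / fact \<mu>) ^ k (\<mu> + 1)) * c ^ tuple_degree m k"

lemma gamma_CDF_0:
  assumes "0 < m"
  shows "gamma_CDF m c 0 = 0"
proof -
  obtain m' where m: "m = Suc m'" using assms by (cases m) auto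
  show ?thesis unfolding gamma_CDF_def m sum.lessThan_Suc_shift by simp
qed

lemma one_minus_gamma_CDF_power:
  "1 - gamma_CDF m c t ^ N
    = (\<Sum>k\<in>tuples N m. tail_coeff N m c k * t ^ tuple_degree m k * exp (- (real (N - k 0) * c) * t))"
proof -
  define a where "a i = (if i = 0 then 1 else - ((c * t) ^ (i - 1) * exp (- c * t) / fact (i - 1)))" for i
  have factor: "a (\<mu> + 1) ^ k (\<mu> + 1) = (-1) ^ k (\<mu> + 1) * ((1 / fact \<mu>) ^ k (\<mu> + 1)
      * (c ^ (\<mu> * k (\<mu> + 1)) * t ^ (\<mu> * k (\<mu> + 1)))) * exp (- c * t) ^ k (\<mu> + 1)" for k \<mu>
  proof -
    have "a (\<mu> + 1) = (-1) * ((1 / fact \<mu>) * (c ^ \<mu> * t ^ \<mu>) * exp (- c * t))"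
      unfolding a_def by (simp add: power_mult_distrib)
    then show ?thesis by (simp only: power_mult_distrib power_mult[symmetric] mult.assoc)
  qed
  have summand: "multinom N m k * (\<Prod>i\<le>m. a i ^ k i)
      = - (tail_coeff N m c k * t ^ tuple_degree m k * exp (- (real (N - k 0) * c) * t))"
    if k: "k \<in> tuples N m" for k
  proof -
    have "k 0 + (\<Sum>\<mu><m. k (\<mu> + 1)) = N"
      using k unfolding tuples_def by (simp add: sum.atMost_shift)
    then have tail_sum: "(\<Sum>\<mu><m. k (\<mu> + 1)) = N - k 0" by linarith
    have "(\<Prod>i\<le>m. a i ^ k i) = (\<Prod>\<mu><m. a (\<mu> + 1) ^ k (\<mu> + 1))"
      by (simp add: prod.atMost_shift a_def)
    also have "\<dots> = (\<Prod>\<mu><m. (-1) ^ k (\<mu> + 1)) * ((\<Prod>\<mu><m. (1 / fact \<mu>) ^ k (\<mu> + 1))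
        * ((\<Prod>\<mu><m. c ^ (\<mu> * k (\<mu> + 1))) * (\<Prod>\<mu><m. t ^ (\<mu> * k (\<mu> + 1)))))
        * (\<Prod>\<mu><m. exp (- c * t) ^ k (\<mu> + 1))"
      unfolding factor by (simp only: prod.distrib)
    also have "\<dots> = (-1) ^ (N - k 0) * ((\<Prod>\<mu><m. (1 / fact \<mu>) ^ k (\<mu> + 1))
        * (c ^ tuple_degree m k * t ^ tuple_degree m k)) * exp (- c * t) ^ (N - k 0)"
      unfolding tuple_degree_def power_sum[symmetric] tail_sum ..
    also have "exp (- c * t) ^ (N - k 0) = exp (- (real (N - k 0) * c) * t)"
      by (simp add: exp_of_nat_mult[symmetric])
    finally show ?thesis unfolding tail_coeff_def by (simp add: algebra_simps)
  qed
  have "gamma_CDF m c t ^ N = (\<Sum>i\<le>m. a i) ^ N"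
    unfolding gamma_CDF_def a_def by (simp add: sum.atMost_shift sum_negf)
  also have "\<dots> = (\<Sum>k\<in>weak_compositions m N. multinom N m k * (\<Prod>i\<le>m. a i ^ k i))"
    by (rule multinomial_theorem)
  also have "\<dots> = 1 + (\<Sum>k\<in>tuples N m. multinom N m k * (\<Prod>i\<le>m. a i ^ k i))"
  proof -
    let ?e = "\<lambda>i\<in>{..m}. if i = 0 then N else 0"
    have "?e \<notin> tuples N m" unfolding tuples_def by simp
    moreover have "multinom N m ?e * (\<Prod>i\<le>m. a i ^ ?e i) = 1"
      unfolding multinom_def a_def by (simp add: sum.atMost_shift prod.atMost_shift)
    ultimately show ?thesis
      unfolding weak_compositions_eq_insert_tuples using finite_tuples by simp
  qed
  finally show ?thesis by (simp add: summand sum_negf)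
qed

lemma gamma_dens_AE_erlang_density:
  assumes "0 < m" "0 < \<Omega>"
  shows "AE x in lborel. ennreal (gamma_dens m \<Omega> x) = ennreal (erlang_density (m - 1) (real m / \<Omega>) x)"
  using AE_lborel_singleton[of 0]
proof (rule eventually_mono)
  fix x :: real
  assume "x \<noteq> 0"
  moreover have "Gamma (real m) = fact (m - 1)"
    using Gamma_fact[of "m - 1"] assms(1) by (simp add: of_nat_diff)
  moreover have "Suc (m - 1) = m" using assms(1) by simp
  ultimately show "ennreal (gamma_dens m \<Omega> x) = ennreal (erlang_density (m - 1) (real m / \<Omega>) x)"
    unfolding gamma_dens_def erlang_density_def by (auto simp: field_simps)
qed

lemma (in prob_space) gamma_distributed_le:
  assumes "distributed M lborel X (\<lambda>x. ennreal (gamma_dens m \<Omega> x))"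
    and m: "0 < m" and \<Omega>: "0 < \<Omega>" and t: "0 \<le> t"
  shows "prob {w \<in> space M. X w \<le> t} = gamma_CDF m (real m / \<Omega>) t"
proof -
  have "distributed M lborel X (erlang_density (m - 1) (real m / \<Omega>))"
    using assms(1) distributed_cong_density[OF gamma_dens_AE_erlang_density[OF m \<Omega>]]
    by (auto simp: gamma_dens_def[abs_def])
  then have "prob {w \<in> space M. X w \<le> t} = erlang_CDF (m - 1) (real m / \<Omega>) t"
    using erlang_distributed_le m \<Omega> t by simp
  moreover have "{..m - 1} = {..<m}" using m by auto
  ultimately show ?thesis unfolding erlang_CDF_def gamma_CDF_def using t by simp
qed

lemma (in prob_space) prob_indep_vars_all_le:
  fixes Y :: "'i \<Rightarrow> 'a \<Rightarrow> real"
  assumes "indep_vars (\<lambda>_. borel) Y I" "finite J" "J \<subseteq> I" "J \<noteq> {}"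
  shows "prob {w \<in> space M. \<forall>c\<in>J. Y c w \<le> t} = (\<Prod>c\<in>J. prob {w \<in> space M. Y c w \<le> t})"
proof -
  have "indep_events (\<lambda>c. {w \<in> space M. Y c w \<le> t}) I"
    by (rule indep_eventsI_indep_vars[OF assms(1)]) measurable
  then have "prob (\<Inter>c\<in>J. {w \<in> space M. Y c w \<le> t}) = (\<Prod>c\<in>J. prob {w \<in> space M. Y c w \<le> t})"
    using assms(2-4) unfolding indep_events_def by auto
  moreover have "(\<Inter>c\<in>J. {w \<in> space M. Y c w \<le> t}) = {w \<in> space M. \<forall>c\<in>J. Y c w \<le> t}"
    using assms(4) by auto
  ultimately show ?thesis by simp
qed

lemma (in prob_space) prob_min_Max_gt:
  fixes X Y :: "nat \<Rightarrow> 'a \<Rightarrow> real"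
  assumes indep: "indep_vars (\<lambda>_. borel) (\<lambda>c. case c of Inl i \<Rightarrow> X i | Inr j \<Rightarrow> Y j) (Inl ` A \<union> Inr ` B)"
    and A: "finite A" "A \<noteq> {}" and B: "finite B" "B \<noteq> {}"
    and F: "\<And>i. i \<in> A \<Longrightarrow> prob {w \<in> space M. X i w \<le> t} = F"
    and G: "\<And>j. j \<in> B \<Longrightarrow> prob {w \<in> space M. Y j w \<le> t} = G"
  shows "prob {w \<in> space M. t < min (Max ((\<lambda>i. X i w) ` A)) (Max ((\<lambda>j. Y j w) ` B))}
    = (1 - F ^ card A) * (1 - G ^ card B)"
proof -
  define Z where "Z = (\<lambda>c. case c of Inl i \<Rightarrow> X i | Inr j \<Rightarrow> Y j)"
  have indep': "indep_vars (\<lambda>_. borel) Z (Inl ` A \<union> Inr ` B)"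
    using indep unfolding Z_def .
  have rv: "Z c \<in> borel_measurable M" if "c \<in> Inl ` A \<union> Inr ` B" for c
    using indep' that unfolding indep_vars_def by blast
  have [measurable]: "X i \<in> borel_measurable M" if "i \<in> A" for i
    using rv[of "Inl i"] that by (simp add: Z_def)
  have [measurable]: "Y j \<in> borel_measurable M" if "j \<in> B" for j
    using rv[of "Inr j"] that by (simp add: Z_def)
  define PZ where "PZ J = prob {w \<in> space M. \<forall>c\<in>J. Z c w \<le> t}" for J
  have PZ: "PZ J = (\<Prod>c\<in>J. prob {w \<in> space M. Z c w \<le> t})" if "J \<subseteq> Inl ` A \<union> Inr ` B" "J \<noteq> {}" for J
    unfolding PZ_def using prob_indep_vars_all_le[OF indep' _ that] A B finite_subset[OF that(1)] by simp
  have probA: "PZ (Inl ` A) = F ^ card A"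
    using PZ[of "Inl ` A"] A F by (simp add: prod.reindex Z_def)
  have probB: "PZ (Inr ` B) = G ^ card B"
    using PZ[of "Inr ` B"] B G by (simp add: prod.reindex Z_def)
  have probAB: "PZ (Inl ` A \<union> Inr ` B) = F ^ card A * G ^ card B"
    using PZ[of "Inl ` A \<union> Inr ` B"] PZ[of "Inl ` A"] PZ[of "Inr ` B"] A B
    by (simp add: probA[symmetric] probB[symmetric]) (rule prod.union_disjoint, auto)
  define EA where "EA = {w \<in> space M. \<forall>c\<in>Inl ` A. Z c w \<le> t}"
  define EB where "EB = {w \<in> space M. \<forall>c\<in>Inr ` B. Z c w \<le> t}"
  have Max_le: "Max ((\<lambda>i. X i w) ` A) \<le> t \<longleftrightarrow> (\<forall>c\<in>Inl ` A. Z c w \<le> t)"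
    "Max ((\<lambda>j. Y j w) ` B) \<le> t \<longleftrightarrow> (\<forall>c\<in>Inr ` B. Z c w \<le> t)" for w
    using A B by (auto simp: Z_def)
  have events: "EA \<in> events" "EB \<in> events"
    unfolding EA_def EB_def Max_le[symmetric] using A B by measurable
  have "EA \<inter> EB = {w \<in> space M. \<forall>c\<in>Inl ` A \<union> Inr ` B. Z c w \<le> t}"
    unfolding EA_def EB_def by auto
  then have "prob (EA \<inter> EB) = F ^ card A * G ^ card B"
    using probAB by (simp add: PZ_def)
  moreover have "{w \<in> space M. t < min (Max ((\<lambda>i. X i w) ` A)) (Max ((\<lambda>j. Y j w) ` B))} = space M - (EA \<union> EB)"
    unfolding EA_def EB_def Max_le[symmetric] by auto
  moreover have "prob (space M - (EA \<union> EB)) = 1 - (prob EA + prob EB - prob (EA \<inter> EB))"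
    using prob_compl[of "EA \<union> EB"] events measure_Un3[of EA M EB] by (auto simp: fmeasurable_eq_sets)
  ultimately show ?thesis
    using probA probB unfolding PZ_def EA_def[symmetric] EB_def[symmetric] by (simp add: algebra_simps)
qed

lemma (in prob_space) nn_integral_comp_eq_survival:
  fixes Z :: "'a \<Rightarrow> real" and g H :: "real \<Rightarrow> real"
  assumes [measurable]: "Z \<in> borel_measurable M" "g \<in> borel_measurable borel"
    and Z_nonneg: "\<And>w. 0 \<le> Z w" and g_nonneg: "\<And>t. 0 \<le> t \<Longrightarrow> 0 \<le> g t"
    and H': "\<And>t. 0 \<le> t \<Longrightarrow> DERIV H t :> g t" and "H 0 = 0"
  shows "(\<integral>\<^sup>+w. ennreal (H (Z w)) \<partial>M)
    = (\<integral>\<^sup>+t. ennreal (g t) * indicator {0..} t * emeasure M {w \<in> space M. t < Z w} \<partial>lborel)"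
proof -
  interpret pair_sigma_finite M lborel
    by (intro pair_sigma_finite.intro prob_space_imp_sigma_finite sigma_finite_lborel) unfold_locales
  define F where "F w t = ennreal (g t) * (if 0 \<le> t \<and> t < Z w then 1 else 0)" for w t
  have [measurable]: "case_prod F \<in> borel_measurable (M \<Otimes>\<^sub>M lborel)"
    unfolding F_def by measurable
  have "ennreal (H (Z w)) = (\<integral>\<^sup>+t. F w t \<partial>lborel)" for w
  proof -
    have "(\<integral>\<^sup>+t. F w t \<partial>lborel) = (\<integral>\<^sup>+t. ennreal (g t) * indicator {0 .. Z w} t \<partial>lborel)"
      by (intro nn_integral_cong_AE)
         (use AE_lborel_singleton[of "Z w"]
           in \<open>auto simp: F_def split: split_indicator elim!: eventually_mono\<close>)
    also have "\<dots> = ennreal (H (Z w) - H 0)"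
      by (rule nn_integral_FTC_Icc) (use H' g_nonneg Z_nonneg in auto)
    finally show ?thesis by (simp add: \<open>H 0 = 0\<close>)
  qed
  then have "(\<integral>\<^sup>+w. ennreal (H (Z w)) \<partial>M) = (\<integral>\<^sup>+w. (\<integral>\<^sup>+t. F w t \<partial>lborel) \<partial>M)"
    by simp
  also have "\<dots> = (\<integral>\<^sup>+t. (\<integral>\<^sup>+w. F w t \<partial>M) \<partial>lborel)"
    by (rule Fubini'[symmetric]) measurable
  also have "\<dots> = (\<integral>\<^sup>+t. ennreal (g t) * indicator {0..} t * emeasure M {w \<in> space M. t < Z w} \<partial>lborel)"
  proof (rule nn_integral_cong)
    fix t :: real
    have "(\<integral>\<^sup>+w. F w t \<partial>M)
        = (\<integral>\<^sup>+w. (ennreal (g t) * indicator {0..} t) * indicator {w \<in> space M. t < Z w} w \<partial>M)"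
      by (intro nn_integral_cong) (auto simp: F_def split: split_indicator)
    also have "\<dots> = ennreal (g t) * indicator {0..} t * emeasure M {w \<in> space M. t < Z w}"
      by (rule nn_integral_cmult_indicator) measurable
    finally show "(\<integral>\<^sup>+w. F w t \<partial>M) = ennreal (g t) * indicator {0..} t * emeasure M {w \<in> space M. t < Z w}" .
  qed
  finally show ?thesis .
qed

lemma (in prob_space) integral_comp_eq_survival:
  fixes X :: "'a \<Rightarrow> real" and g H Q :: "real \<Rightarrow> real"
  assumes [measurable]: "X \<in> borel_measurable M" "g \<in> borel_measurable borel"
      "H \<in> borel_measurable borel" "Q \<in> borel_measurable borel"
    and X_nonneg: "AE w in M. 0 \<le> X w" and g_nonneg: "\<And>t. 0 \<le> t \<Longrightarrow> 0 \<le> g t"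
    and H': "\<And>t. 0 \<le> t \<Longrightarrow> DERIV H t :> g t" and "H 0 = 0"
    and Q: "\<And>t. 0 \<le> t \<Longrightarrow> prob {w \<in> space M. t < X w} = Q t"
  shows "(\<integral>w. H (X w) \<partial>M) = (\<integral>t. indicator {0..} t * (g t * Q t) \<partial>lborel)"
proof -
  define Z where "Z w = max 0 (X w)" for w
  have [measurable]: "Z \<in> borel_measurable M" unfolding Z_def by measurable
  have H_nonneg: "0 \<le> H z" if "0 \<le> z" for z
    using DERIV_nonneg_imp_nondecreasing[of 0 z H] that H' g_nonneg \<open>H 0 = 0\<close> by auto
  have "(\<integral>w. H (X w) \<partial>M) = (\<integral>w. H (Z w) \<partial>M)"
    by (rule integral_cong_AE) (use X_nonneg in \<open>auto simp: Z_def elim!: eventually_mono\<close>)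
  also have "\<dots> = enn2real (\<integral>\<^sup>+w. ennreal (H (Z w)) \<partial>M)"
    by (rule integral_eq_nn_integral) (auto simp: Z_def H_nonneg)
  also have "(\<integral>\<^sup>+w. ennreal (H (Z w)) \<partial>M)
      = (\<integral>\<^sup>+t. ennreal (g t) * indicator {0..} t * emeasure M {w \<in> space M. t < Z w} \<partial>lborel)"
    by (rule nn_integral_comp_eq_survival) (auto simp: Z_def g_nonneg H' \<open>H 0 = 0\<close>)
  also have "\<dots> = (\<integral>\<^sup>+t. ennreal (indicator {0..} t * (g t * Q t)) \<partial>lborel)"
  proof (rule nn_integral_cong)
    fix t :: real
    show "ennreal (g t) * indicator {0..} t * emeasure M {w \<in> space M. t < Z w}
        = ennreal (indicator {0..} t * (g t * Q t))"
    proof (cases "0 \<le> t")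
      case True
      then have "{w \<in> space M. t < Z w} = {w \<in> space M. t < X w}" by (auto simp: Z_def)
      then have "emeasure M {w \<in> space M. t < Z w} = ennreal (Q t)"
        using Q[OF True] by (simp add: emeasure_eq_measure)
      moreover have "0 \<le> Q t" using Q[OF True] by (metis measure_nonneg)
      ultimately show ?thesis using True g_nonneg[OF True] by (simp add: ennreal_mult)
    qed simp
  qed
  also have "enn2real \<dots> = (\<integral>t. indicator {0..} t * (g t * Q t) \<partial>lborel)"
    by (rule enn2real_nn_integral_eq_integral)
       (auto simp: g_nonneg Q[symmetric] split: split_indicator)
  finally show ?thesis .
qed

lemma (in prob_space) integral_ln_ratio_eq_survival:
  fixes X :: "'a \<Rightarrow> real" and Q :: "real \<Rightarrow> real" and \<beta> \<beta>' :: real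
  assumes [measurable]: "X \<in> borel_measurable M" "Q \<in> borel_measurable borel"
    and "AE w in M. 0 \<le> X w" and "0 < \<beta>'" "\<beta>' \<le> \<beta>"
    and "\<And>t. 0 \<le> t \<Longrightarrow> prob {w \<in> space M. t < X w} = Q t"
  shows "(\<integral>w. ln (1 + \<beta> * X w) - ln (1 + \<beta>' * X w) \<partial>M)
    = (\<integral>t. indicator {0..} t * ((\<beta> / (1 + \<beta> * t) - \<beta>' / (1 + \<beta>' * t)) * Q t) \<partial>lborel)"
proof (rule integral_comp_eq_survival[where H = "\<lambda>z. ln (1 + \<beta> * z) - ln (1 + \<beta>' * z)"])
  fix t :: real
  assume "0 \<le> t"
  then have pos: "0 < 1 + \<beta> * t" "0 < 1 + \<beta>' * t" using assms(4,5) by (simp_all add: add_pos_nonneg)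
  show "((\<lambda>z. ln (1 + \<beta> * z) - ln (1 + \<beta>' * z))
      has_real_derivative \<beta> / (1 + \<beta> * t) - \<beta>' / (1 + \<beta>' * t)) (at t)"
    using pos by (auto intro!: derivative_eq_intros)
  have "\<beta>' * (1 + \<beta> * t) \<le> \<beta> * (1 + \<beta>' * t)" using assms(5) by (simp add: algebra_simps)
  then show "0 \<le> \<beta> / (1 + \<beta> * t) - \<beta>' / (1 + \<beta>' * t)"
    using pos by (simp add: divide_simps)
qed (use assms in simp_all)

lemma pole_gamma_survival_expansion:
  fixes c1 c2 \<beta> t :: real
  shows "indicator {0..} t * (\<beta> / (1 + \<beta> * t) * ((1 - gamma_CDF m1 c1 t ^ N1) * (1 - gamma_CDF m2 c2 t ^ N2)))
    = (\<Sum>k\<in>tuples N1 m1. \<Sum>l\<in>tuples N2 m2. tail_coeff N1 m1 c1 k * tail_coeff N2 m2 c2 l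
        * pole_exp (tuple_degree m1 k + tuple_degree m2 l) (real (N1 - k 0) * c1 + real (N2 - l 0) * c2) \<beta> t)"
proof -
  have summand:
    "indicator {0..} t * (\<beta> / (1 + \<beta> * t) * ((C1 * t ^ a * exp (- r1 * t)) * (C2 * t ^ b * exp (- r2 * t))))
      = C1 * C2 * pole_exp (a + b) (r1 + r2) \<beta> t" for C1 C2 r1 r2 :: real and a b
  proof -
    have "exp (- (r1 + r2) * t) = exp (- r1 * t) * exp (- r2 * t)"
      by (simp add: mult_exp_exp algebra_simps)
    then have "pole_exp (a + b) (r1 + r2) \<beta> t
        = indicator {0..} t * (\<beta> * (t ^ a * t ^ b) * (exp (- r1 * t) * exp (- r2 * t)) / (1 + \<beta> * t))"
      unfolding pole_exp_def power_add by simp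
    then show ?thesis by (simp add: mult_ac)
  qed
  show ?thesis
    unfolding one_minus_gamma_CDF_power sum_product unfolding sum_distrib_left summand ..
qed

lemma has_bochner_integral_pole_gamma_survival:
  fixes c1 c2 \<beta> :: real
  assumes "0 < c1" "0 \<le> c2" "0 < \<beta>"
  shows "has_bochner_integral lborel
    (\<lambda>t. indicator {0..} t * (\<beta> / (1 + \<beta> * t) * ((1 - gamma_CDF m1 c1 t ^ N1) * (1 - gamma_CDF m2 c2 t ^ N2))))
    (\<Sum>k\<in>tuples N1 m1. \<Sum>l\<in>tuples N2 m2. tail_coeff N1 m1 c1 k * tail_coeff N2 m2 c2 l
      * (fact (tuple_degree m1 k + tuple_degree m2 l) / \<beta> ^ (tuple_degree m1 k + tuple_degree m2 l)
         * exp ((real (N1 - k 0) * c1 + real (N2 - l 0) * c2) / \<beta>)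
         * upper_Gamma (- real (tuple_degree m1 k + tuple_degree m2 l))
             ((real (N1 - k 0) * c1 + real (N2 - l 0) * c2) / \<beta>)))"
proof -
  have "has_bochner_integral lborel (pole_exp n (real (N1 - k 0) * c1 + real (N2 - l 0) * c2) \<beta>)
      (fact n / \<beta> ^ n * exp ((real (N1 - k 0) * c1 + real (N2 - l 0) * c2) / \<beta>)
        * upper_Gamma (- real n) ((real (N1 - k 0) * c1 + real (N2 - l 0) * c2) / \<beta>))"
    if "k \<in> tuples N1 m1" for k l n
  proof -
    have "0 < real (N1 - k 0) * c1 + real (N2 - l 0) * c2"
      using tuples_head_less[OF that] assms(1,2) by (simp add: add_pos_nonneg)
    with assms(3) show ?thesis
      by (simp add: has_bochner_integral_iff integrable_pole_exp integral_pole_exp)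
  qed
  then show ?thesis
    unfolding pole_gamma_survival_expansion
    by (intro has_bochner_integral_sum has_bochner_integral_mult_right) (auto simp del: of_nat_add)
qed

lemma log_capacity_eq_ln_diff:
  fixes x \<rho> a1 a2 :: real
  assumes "0 \<le> x" "0 < \<rho>" "0 < a2" "a1 + a2 = 1"
  shows "log 2 (1 + a1 * \<rho> * x / (a2 * \<rho> * x + 1)) = (ln (1 + \<rho> * x) - ln (1 + \<rho> * a2 * x)) / ln 2"
proof -
  have pos: "0 < 1 + \<rho> * x" "0 < 1 + \<rho> * a2 * x" using assms by (simp_all add: add_pos_nonneg)
  have "a1 * \<rho> * x + a2 * \<rho> * x = (a1 + a2) * \<rho> * x" by (simp add: algebra_simps)
  then have "a2 * \<rho> * x + 1 + a1 * \<rho> * x = 1 + \<rho> * x" using assms(4) by simp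
  moreover have "1 + a1 * \<rho> * x / (a2 * \<rho> * x + 1) = (a2 * \<rho> * x + 1 + a1 * \<rho> * x) / (a2 * \<rho> * x + 1)"
    using pos by (simp add: add_divide_distrib mult.commute mult.left_commute)
  ultimately have "1 + a1 * \<rho> * x / (a2 * \<rho> * x + 1) = (1 + \<rho> * x) / (1 + \<rho> * a2 * x)"
    by (simp add: mult.commute mult.left_commute add.commute)
  then show ?thesis using pos by (simp add: log_def ln_div)
qed

lemma capacity_summand_eq:
  fixes \<rho> a2 \<Omega>sr \<Omega>sd :: real
  assumes "0 < \<rho>" "0 < a2" "k \<in> tuples Nr msr" "l \<in> tuples Nd msd"
  defines "n \<equiv> tuple_degree msr k + tuple_degree msd l"
    and "\<Psi> \<equiv> real (Nr - k 0) * (real msr / \<Omega>sr) + real (Nd - l 0) * (real msd / \<Omega>sd)"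
  shows "tail_coeff Nr msr (real msr / \<Omega>sr) k * tail_coeff Nd msd (real msd / \<Omega>sd) l
        * (fact n / \<rho> ^ n * exp (\<Psi> / \<rho>) * upper_Gamma (- real n) (\<Psi> / \<rho>))
      - tail_coeff Nr msr (real msr / \<Omega>sr) k * tail_coeff Nd msd (real msd / \<Omega>sd) l
        * (fact n / (\<rho> * a2) ^ n * exp (\<Psi> / (\<rho> * a2)) * upper_Gamma (- real n) (\<Psi> / (\<rho> * a2)))
    = (let \<tau> = (\<Sum>\<mu><msr. \<mu> * k (\<mu> + 1));
           \<omega> = (\<Sum>\<nu><msd. \<nu> * l (\<nu> + 1));
           \<Psi> = real (Nr - k 0) * real msr / \<Omega>sr + real (Nd - l 0) * real msd / \<Omega>sd
       in multinom Nr msr k * multinom Nd msd l * (-1) ^ (Nr + Nd - k 0 - l 0)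
          * (\<Prod>\<mu><msr. (1 / fact \<mu>) ^ k (\<mu> + 1)) * (real msr / \<Omega>sr) ^ \<tau>
          * (\<Prod>\<nu><msd. (1 / fact \<nu>) ^ l (\<nu> + 1)) * (real msd / \<Omega>sd) ^ \<omega>
          * Gamma (real (\<tau> + \<omega>) + 1) / \<rho> ^ (\<tau> + \<omega>)
          * (exp (\<Psi> / \<rho>) * upper_Gamma (- real (\<tau> + \<omega>)) (\<Psi> / \<rho>)
             - 1 / a2 ^ (\<tau> + \<omega>) * exp (\<Psi> / (\<rho> * a2))
               * upper_Gamma (- real (\<tau> + \<omega>)) (\<Psi> / (\<rho> * a2))))"
proof -
  have sign: "(-1::real) ^ (Nr - k 0 + 1) * (-1) ^ (Nd - l 0 + 1) = (-1) ^ (Nr + Nd - k 0 - l 0)"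
  proof -
    have "k 0 \<le> Nr" "l 0 \<le> Nd" using tuples_head_less assms(3,4) by (simp_all add: less_imp_le)
    then have "Nr - k 0 + 1 + (Nd - l 0 + 1) = (Nr + Nd - k 0 - l 0) + 2" by simp
    then show ?thesis by (metis power_add neg_one_even_power even_numeral mult.right_neutral)
  qed
  have coeff: "tail_coeff Nr msr (real msr / \<Omega>sr) k * tail_coeff Nd msd (real msd / \<Omega>sd) l
      = multinom Nr msr k * multinom Nd msd l * (-1) ^ (Nr + Nd - k 0 - l 0)
        * (\<Prod>\<mu><msr. (1 / fact \<mu>) ^ k (\<mu> + 1)) * (real msr / \<Omega>sr) ^ tuple_degree msr k
        * (\<Prod>\<nu><msd. (1 / fact \<nu>) ^ l (\<nu> + 1)) * (real msd / \<Omega>sd) ^ tuple_degree msd l"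
    unfolding tail_coeff_def sign[symmetric] by (simp only: mult_ac)
  have "C * (F / \<rho> ^ n * E1 * U1) - C * (F / (\<rho> * a2) ^ n * E2 * U2)
      = C * F / \<rho> ^ n * (E1 * U1 - 1 / a2 ^ n * E2 * U2)" for C F E1 E2 U1 U2 :: real
    using assms(1,2) by (simp add: field_simps power_mult_distrib)
  moreover have "Gamma (real n + 1) = fact n" using Gamma_fact[of n] by (simp add: add.commute)
  moreover have "real (Nr - k 0) * (real msr / \<Omega>sr) + real (Nd - l 0) * (real msd / \<Omega>sd)
      = real (Nr - k 0) * real msr / \<Omega>sr + real (Nd - l 0) * real msd / \<Omega>sd"
    by simp
  ultimately show ?thesis
    unfolding Let_def coeff tuple_degree_def[symmetric] n_def[symmetric] \<Psi>_def by simp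
qed

lemma integral_capacity_gamma_survival:
  fixes \<rho> a2 \<Omega>sr \<Omega>sd :: real
  assumes "0 < \<rho>" "0 < a2" "a2 < 1" "0 < msr" "0 < \<Omega>sr" "0 < \<Omega>sd"
  shows "(\<integral>t. indicator {0..} t * ((\<rho> / (1 + \<rho> * t) - \<rho> * a2 / (1 + \<rho> * a2 * t))
      * ((1 - gamma_CDF msr (real msr / \<Omega>sr) t ^ Nr) * (1 - gamma_CDF msd (real msd / \<Omega>sd) t ^ Nd))) \<partial>lborel)
    = (\<Sum>k\<in>tuples Nr msr. \<Sum>l\<in>tuples Nd msd.
        (let \<tau> = (\<Sum>\<mu><msr. \<mu> * k (\<mu> + 1));
             \<omega> = (\<Sum>\<nu><msd. \<nu> * l (\<nu> + 1));
             \<Psi> = real (Nr - k 0) * real msr / \<Omega>sr + real (Nd - l 0) * real msd / \<Omega>sd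
         in multinom Nr msr k * multinom Nd msd l * (-1) ^ (Nr + Nd - k 0 - l 0)
            * (\<Prod>\<mu><msr. (1 / fact \<mu>) ^ k (\<mu> + 1)) * (real msr / \<Omega>sr) ^ \<tau>
            * (\<Prod>\<nu><msd. (1 / fact \<nu>) ^ l (\<nu> + 1)) * (real msd / \<Omega>sd) ^ \<omega>
            * Gamma (real (\<tau> + \<omega>) + 1) / \<rho> ^ (\<tau> + \<omega>)
            * (exp (\<Psi> / \<rho>) * upper_Gamma (- real (\<tau> + \<omega>)) (\<Psi> / \<rho>)
               - 1 / a2 ^ (\<tau> + \<omega>) * exp (\<Psi> / (\<rho> * a2))
                 * upper_Gamma (- real (\<tau> + \<omega>)) (\<Psi> / (\<rho> * a2)))))"
    (is "_ = ?sum")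
proof -
  define S where "S \<beta> = (\<Sum>k\<in>tuples Nr msr. \<Sum>l\<in>tuples Nd msd.
      tail_coeff Nr msr (real msr / \<Omega>sr) k * tail_coeff Nd msd (real msd / \<Omega>sd) l
      * (fact (tuple_degree msr k + tuple_degree msd l) / \<beta> ^ (tuple_degree msr k + tuple_degree msd l)
         * exp ((real (Nr - k 0) * (real msr / \<Omega>sr) + real (Nd - l 0) * (real msd / \<Omega>sd)) / \<beta>)
         * upper_Gamma (- real (tuple_degree msr k + tuple_degree msd l))
             ((real (Nr - k 0) * (real msr / \<Omega>sr) + real (Nd - l 0) * (real msd / \<Omega>sd)) / \<beta>)))" for \<beta>
  have "has_bochner_integral lborel (\<lambda>t. indicator {0..} t * (\<beta> / (1 + \<beta> * t)
      * ((1 - gamma_CDF msr (real msr / \<Omega>sr) t ^ Nr) * (1 - gamma_CDF msd (real msd / \<Omega>sd) t ^ Nd)))) (S \<beta>)"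
    if "0 < \<beta>" for \<beta>
    unfolding S_def by (rule has_bochner_integral_pole_gamma_survival) (use that assms in auto)
  from has_bochner_integral_diff[OF this[of \<rho>] this[of "\<rho> * a2"]]
  have "(\<integral>t. indicator {0..} t * ((\<rho> / (1 + \<rho> * t) - \<rho> * a2 / (1 + \<rho> * a2 * t))
      * ((1 - gamma_CDF msr (real msr / \<Omega>sr) t ^ Nr) * (1 - gamma_CDF msd (real msd / \<Omega>sd) t ^ Nd))) \<partial>lborel)
    = S \<rho> - S (\<rho> * a2)"
    using assms(1,2) by (simp add: algebra_simps has_bochner_integral_integral_eq)
  also have "S \<rho> - S (\<rho> * a2) = ?sum"
    unfolding S_def sum_subtractf[symmetric] using assms(1,2)
    by (intro sum.cong refl capacity_summand_eq) auto
  finally show ?thesis .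
qed

theorem theorem1:
  fixes M :: "'a measure"
    and Gsr Gsd :: "nat \<Rightarrow> 'a \<Rightarrow> real"
    and Nr Nd msr msd :: nat
    and \<Omega>sr \<Omega>sd \<rho> a1 a2 :: real
  assumes "prob_space M"
    and "Nr > 0" "Nd > 0" "msr > 0" "msd > 0"
    and "\<Omega>sr > 0" "\<Omega>sd > 0" "\<rho> > 0"
    and "0 < a1" "a1 < 1" "0 < a2" "a2 < 1" "a1 + a2 = 1" "a1 > a2"
    and "\<And>i. i \<in> {1..Nr} \<Longrightarrow> distributed M lborel (Gsr i) (\<lambda>x. ennreal (gamma_dens msr \<Omega>sr x))"
    and "\<And>j. j \<in> {1..Nd} \<Longrightarrow> distributed M lborel (Gsd j) (\<lambda>x. ennreal (gamma_dens msd \<Omega>sd x))"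
    and "prob_space.indep_vars M (\<lambda>_. borel)
           (\<lambda>c. case c of Inl i \<Rightarrow> Gsr i | Inr j \<Rightarrow> Gsd j) (Inl ` {1..Nr} \<union> Inr ` {1..Nd})"
  shows
   "(let gsr = (\<lambda>w. Max ((\<lambda>i. Gsr i w) ` {1..Nr}));
         gsd = (\<lambda>w. Max ((\<lambda>j. Gsd j w) ` {1..Nd}));
         X = (\<lambda>w. min (gsr w) (gsd w))
     in 1/2 * (\<integral>w. log 2 (1 + a1 * \<rho> * X w / (a2 * \<rho> * X w + 1)) \<partial>M))
    = 1 / (2 * ln 2) *
      (\<Sum>k\<in>tuples Nr msr. \<Sum>l\<in>tuples Nd msd.
        (let \<tau> = (\<Sum>\<mu><msr. \<mu> * k (\<mu> + 1));
             \<omega> = (\<Sum>\<nu><msd. \<nu> * l (\<nu> + 1));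
             \<Psi> = real (Nr - k 0) * real msr / \<Omega>sr + real (Nd - l 0) * real msd / \<Omega>sd
         in multinom Nr msr k * multinom Nd msd l * (-1) ^ (Nr + Nd - k 0 - l 0)
            * (\<Prod>\<mu><msr. (1 / fact \<mu>) ^ k (\<mu> + 1)) * (real msr / \<Omega>sr) ^ \<tau>
            * (\<Prod>\<nu><msd. (1 / fact \<nu>) ^ l (\<nu> + 1)) * (real msd / \<Omega>sd) ^ \<omega>
            * Gamma (real (\<tau> + \<omega>) + 1) / \<rho> ^ (\<tau> + \<omega>)
            * (exp (\<Psi> / \<rho>) * upper_Gamma (- real (\<tau> + \<omega>)) (\<Psi> / \<rho>)
               - 1 / a2 ^ (\<tau> + \<omega>) * exp (\<Psi> / (\<rho> * a2))
                 * upper_Gamma (- real (\<tau> + \<omega>)) (\<Psi> / (\<rho> * a2)))))"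
proof -
  interpret prob_space M by fact
  define X where "X w = min (Max ((\<lambda>i. Gsr i w) ` {1..Nr})) (Max ((\<lambda>j. Gsd j w) ` {1..Nd}))" for w
  define Q where
    "Q t = (1 - gamma_CDF msr (real msr / \<Omega>sr) t ^ Nr) * (1 - gamma_CDF msd (real msd / \<Omega>sd) t ^ Nd)" for t
  have [measurable]: "Gsr i \<in> borel_measurable M" if "i \<in> {1..Nr}" for i
    using distributed_measurable[OF assms(15)[OF that]] by simp
  have [measurable]: "Gsd j \<in> borel_measurable M" if "j \<in> {1..Nd}" for j
    using distributed_measurable[OF assms(16)[OF that]] by simp
  have X_measurable [measurable]: "X \<in> borel_measurable M"
    and Q_measurable [measurable]: "Q \<in> borel_measurable borel"
    unfolding X_def Q_def gamma_CDF_def by measurable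
  have survival: "prob {w \<in> space M. t < X w} = Q t" if "0 \<le> t" for t
    using prob_min_Max_gt[OF assms(17), of t] assms(2-7,15,16) that
    by (simp add: X_def Q_def gamma_distributed_le)
  have "prob {w \<in> space M. 0 < X w} = 1"
    using survival[of 0] assms(2-5) by (simp add: Q_def gamma_CDF_0 power_0_left)
  then have X_nonneg: "AE w in M. 0 \<le> X w"
    by (auto dest: AE_prob_1 elim: eventually_mono)
  have "(\<integral>w. log 2 (1 + a1 * \<rho> * X w / (a2 * \<rho> * X w + 1)) \<partial>M)
      = (\<integral>w. ln (1 + \<rho> * X w) - ln (1 + \<rho> * a2 * X w) \<partial>M) / ln 2"
    using X_nonneg assms(8,11,13)
    by (subst integral_divide_zero[symmetric], intro integral_cong_AE)
       (auto simp: log_capacity_eq_ln_diff elim!: eventually_mono)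
  also have "(\<integral>w. ln (1 + \<rho> * X w) - ln (1 + \<rho> * a2 * X w) \<partial>M)
      = (\<integral>t. indicator {0..} t * ((\<rho> / (1 + \<rho> * t) - \<rho> * a2 / (1 + \<rho> * a2 * t)) * Q t) \<partial>lborel)"
    using assms(8,11,12)
    by (intro integral_ln_ratio_eq_survival X_measurable Q_measurable X_nonneg survival)
       (simp_all add: mult_left_le)
  finally show ?thesis
    unfolding Q_def integral_capacity_gamma_survival[OF assms(8,11,12,4,6,7)] by (simp add: X_def)
qed

end
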